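(* Let $(\mathcal{S}_1,\mathcal{S}_2)$ be an $S$-pair, let $A \subseteq S$, $x \in A$, $i \in \{1,2\}$, and let $j \ge 2$ be an integer with $j \le |A|$. Suppose every $j$-element subset of $A$ containing $x$ lies in $\mathcal{S}_i$. Then every $j$-element subset of $A$ lies in $\mathcal{S}_i$, and $A \in \mathcal{S}_i$.
   Context: Let $S$ be a finite nonempty set and $\mathcal{S}_1, \mathcal{S}_2 \subseteq 2^S$. The pair $(\mathcal{S}_1,\mathcal{S}_2)$ is an $S$-pair if: (S1) for $i=1,2$, if $A,B \in \mathcal{S}_i$ with $B \subset A$ and $|A| = |B|+1$, then every $|B|$-element subset of $A$ lies in $\mathcal{S}_i$; (S2) for $i=1,2$, if $A,B \in \mathcal{S}_i$ with $|A|=|B|$ and $|A\cap B| = |A|-1$, then $A\cup B \in \mathcal{S}_i$; (S3) for $i=1,2$, not every singleton $\{s\}$, $s\in S$, lies in $\mathcal{S}_i$, and $S \notin \mathcal{S}_i$; (S4) for $k = 1,\dots,|S|-1$ and $x\in S$, if every $k$-element subset of $S - x$ lies in $\mathcal{S}_1$, then not every $(|S|-k)$-element subset of $S-x$ lies in $\mathcal{S}_2$. *)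

theory Defs
  imports Main
begin

definition S_family_ok :: "'a set \<Rightarrow> 'a set set \<Rightarrow> bool" where
  "S_family_ok S F \<longleftrightarrow>
     F \<subseteq> Pow S \<and>
     (\<forall>A\<in>F. \<forall>B\<in>F. B \<subset> A \<and> card A = card B + 1 \<longrightarrow>
         (\<forall>C. C \<subseteq> A \<and> card C = card B \<longrightarrow> C \<in> F)) \<and>
     (\<forall>A\<in>F. \<forall>B\<in>F. card A = card B \<and> card (A \<inter> B) = card A - 1 \<longrightarrow> A \<union> B \<in> F) \<and>
     \<not> (\<forall>s\<in>S. {s} \<in> F) \<and> S \<notin> F"

definition S_pair :: "'a set \<Rightarrow> 'a set set \<Rightarrow> 'a set set \<Rightarrow> bool" where
  "S_pair S S1 S2 \<longleftrightarrow>
     finite S \<and> S \<noteq> {} \<and> S_family_ok S S1 \<and> S_family_ok S S2 \<and>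
     (\<forall>k x. 1 \<le> k \<and> k \<le> card S - 1 \<and> x \<in> S \<longrightarrow>
        (\<forall>C. C \<subseteq> S - {x} \<and> card C = k \<longrightarrow> C \<in> S1) \<longrightarrow>
        \<not> (\<forall>C. C \<subseteq> S - {x} \<and> card C = card S - k \<longrightarrow> C \<in> S2))"

definition S_pair_fam :: "'a set set \<Rightarrow> 'a set set \<Rightarrow> nat \<Rightarrow> 'a set set" where
  "S_pair_fam S1 S2 i = (if i = 1 then S1 else S2)"

end

theory Submission
  imports Defs
begin

(* Axiom (S2) applied to the two sets E - {y} and E - {z}, for distinct y, z in E, shows that
   E belongs to the family as soon as both of them do.  Hence if all k-subsets of A (k >= 1)
   belong to the family, so do all (k+1)-subsets, and by induction A itself.
   For a j-subset C of A avoiding x, the j-sets insert x (C - {y}) and insert x (C - {z}) contain x,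
   so their union insert x C belongs to the family, and (S1) descends from it to C. *)

lemma S_pair_fam_ok:
  assumes "S_pair S S1 S2" and "i \<in> {1, 2}"
  shows "S_family_ok S (S_pair_fam S1 S2 i)"
  using assms unfolding S_pair_def S_pair_fam_def by auto

lemma S_family_ok_union:
  assumes "S_family_ok S F" and "A \<in> F" "B \<in> F" "card A = card B"
    and "card (A \<inter> B) = card A - 1"
  shows "A \<union> B \<in> F"
  using assms unfolding S_family_ok_def by blast

lemma S_family_ok_subset:
  assumes "S_family_ok S F" and "A \<in> F" "B \<in> F" "B \<subset> A" "card A = card B + 1"
    and "C \<subseteq> A" "card C = card B"
  shows "C \<in> F"
  using assms unfolding S_family_ok_def by blast

lemma card_ge_2_obtain_distinct:
  assumes "finite E" and "2 \<le> card E"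
  obtains y z where "y \<in> E" "z \<in> E" "y \<noteq> z"
  using assms card_le_Suc0_iff_eq[OF assms(1)] by (metis not_less_eq_eq numeral_2_eq_2)

lemma S_family_ok_mem_of_deletions:
  assumes ok: "S_family_ok S F" and "finite E"
    and yz: "y \<in> E" "z \<in> E" "y \<noteq> z"
    and "E - {y} \<in> F" "E - {z} \<in> F"
  shows "E \<in> F"
proof -
  have card_y: "card (E - {y}) = card E - 1" and card_z: "card (E - {z}) = card E - 1"
    using \<open>finite E\<close> yz by simp_all
  have "(E - {y}) \<inter> (E - {z}) = (E - {y}) - {z}" by auto
  then have "card ((E - {y}) \<inter> (E - {z})) = card (E - {y}) - 1"
    using \<open>finite E\<close> yz by simp
  then have "(E - {y}) \<union> (E - {z}) \<in> F"
    using S_family_ok_union[OF ok \<open>E - {y} \<in> F\<close> \<open>E - {z} \<in> F\<close>] card_y card_z by simp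
  moreover have "(E - {y}) \<union> (E - {z}) = E" using yz by auto
  ultimately show ?thesis by simp
qed

lemma S_family_ok_subsets_Suc:
  assumes ok: "S_family_ok S F" and "finite A" and "1 \<le> k"
    and all_k: "\<forall>C. C \<subseteq> A \<and> card C = k \<longrightarrow> C \<in> F"
    and E: "E \<subseteq> A" "card E = Suc k"
  shows "E \<in> F"
proof -
  have "finite E" using E \<open>finite A\<close> finite_subset by blast
  moreover have "2 \<le> card E" using E \<open>1 \<le> k\<close> by simp
  ultimately obtain y z where yz: "y \<in> E" "z \<in> E" "y \<noteq> z"
    by (rule card_ge_2_obtain_distinct)
  moreover have "E - {w} \<in> F" if "w \<in> E" for w
  proof -
    have "E - {w} \<subseteq> A" "card (E - {w}) = k" using E \<open>finite E\<close> that by auto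
    then show ?thesis using all_k by blast
  qed
  ultimately show ?thesis using S_family_ok_mem_of_deletions[OF ok \<open>finite E\<close>] by blast
qed

lemma S_family_ok_subsets_mono:
  assumes ok: "S_family_ok S F" and "finite A" and "1 \<le> k" and "k \<le> n"
    and "\<forall>C. C \<subseteq> A \<and> card C = k \<longrightarrow> C \<in> F"
  shows "\<forall>C. C \<subseteq> A \<and> card C = n \<longrightarrow> C \<in> F"
  using \<open>k \<le> n\<close>
proof (induction n rule: dec_induct)
  case base
  then show ?case using assms(5) .
next
  case (step m)
  have "1 \<le> m" using step.hyps \<open>1 \<le> k\<close> by simp
  then show ?case using S_family_ok_subsets_Suc[OF ok \<open>finite A\<close> _ step.IH] by blast
qed

lemma S_family_ok_subsets_if_subsets_containing:
  assumes ok: "S_family_ok S F" and "finite A" and "x \<in> A" and "2 \<le> j"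
    and all_x: "\<forall>C. C \<subseteq> A \<and> card C = j \<and> x \<in> C \<longrightarrow> C \<in> F"
    and C: "C \<subseteq> A" "card C = j"
  shows "C \<in> F"
proof (cases "x \<in> C")
  case True
  then show ?thesis using all_x C by blast
next
  case False
  have "finite C" using C \<open>finite A\<close> finite_subset by blast
  moreover have "2 \<le> card C" using C \<open>2 \<le> j\<close> by simp
  ultimately obtain y z where yz: "y \<in> C" "z \<in> C" "y \<noteq> z"
    by (rule card_ge_2_obtain_distinct)
  define D where "D = insert x C"
  have "finite D" "x \<in> D" "y \<in> D" "z \<in> D" "C \<subseteq> D"
    using \<open>finite C\<close> yz unfolding D_def by auto
  have del_F: "D - {w} \<in> F" if "w \<in> C" for w
  proof -
    have "D - {w} = insert x (C - {w})" using False that unfolding D_def by auto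
    moreover have "card (insert x (C - {w})) = j"
      using \<open>finite C\<close> \<open>card C = j\<close> False that \<open>2 \<le> j\<close> by simp
    moreover have "insert x (C - {w}) \<subseteq> A" using C \<open>x \<in> A\<close> by auto
    ultimately show ?thesis using all_x by (metis insertI1)
  qed
  have "D \<in> F"
    using S_family_ok_mem_of_deletions[OF ok \<open>finite D\<close> \<open>y \<in> D\<close> \<open>z \<in> D\<close> yz(3)
        del_F[OF yz(1)] del_F[OF yz(2)]] .
  moreover have "D - {y} \<subset> D" using \<open>y \<in> D\<close> by blast
  moreover have "card D = card (D - {y}) + 1"
    using card_Suc_Diff1[OF \<open>finite D\<close> \<open>y \<in> D\<close>] by simp
  moreover have "card C = card (D - {y})"
  proof -
    have "C = D - {x}" using False unfolding D_def by blast
    then show ?thesis using \<open>finite D\<close> \<open>x \<in> D\<close> \<open>y \<in> D\<close> by simp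
  qed
  ultimately show ?thesis
    using S_family_ok_subset[OF ok _ del_F[OF yz(1)] _ _ \<open>C \<subseteq> D\<close>] by simp
qed

theorem mainTheorem7:
  fixes S :: "'a set" and S1 S2 :: "'a set set" and A :: "'a set" and x :: 'a
    and i j :: nat
  assumes "S_pair S S1 S2"
    and "A \<subseteq> S" and "x \<in> A" and "i \<in> {1, 2}"
    and "2 \<le> j" and "j \<le> card A"
    and "\<forall>C. C \<subseteq> A \<and> card C = j \<and> x \<in> C \<longrightarrow> C \<in> S_pair_fam S1 S2 i"
  shows "(\<forall>C. C \<subseteq> A \<and> card C = j \<longrightarrow> C \<in> S_pair_fam S1 S2 i)
         \<and> A \<in> S_pair_fam S1 S2 i"
proof -
  let ?F = "S_pair_fam S1 S2 i"
  have ok: "S_family_ok S ?F" using S_pair_fam_ok assms(1,4) .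
  have "finite A" using assms(1,2) finite_subset unfolding S_pair_def by blast
  have all_j: "\<forall>C. C \<subseteq> A \<and> card C = j \<longrightarrow> C \<in> ?F"
    using S_family_ok_subsets_if_subsets_containing[OF ok \<open>finite A\<close> assms(3,5,7)] by blast
  have "\<forall>C. C \<subseteq> A \<and> card C = card A \<longrightarrow> C \<in> ?F"
    using S_family_ok_subsets_mono[OF ok \<open>finite A\<close> _ assms(6) all_j] assms(5) by simp
  then show ?thesis using all_j by blast
qed

end
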